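(* The lattice $L=-A_1+A_2+2E_8$ is achiral, i.e., for some cell $P$ of $\Lambda(L)$ there is an automorphism $g$ of $L$ with $g(P)=P$ which is $P$-reversing and $\mathbb{Z}/3$-direct.
   Context: $-A_1$ is the rank one lattice generated by a vector of square $-2$; $A_2$, $E_8$ are positive definite root lattices; $+$ denotes orthogonal sum. For $L$: $V_k=\{v\in L:v^2=k,\ 2vw/v^2\in\mathbb{Z}\ \forall w\in L\}$ ($k=2,6$); $\Lambda(L)=\{x\in L\otimes\mathbb{R}: x^2<0\}/\mathbb{R}^*$; cells are closures of components of the complement in $\Lambda(L)$ of the hyperplanes $v^\perp$, $v\in V_2\cup V_6$. A cell $P$ lifts to two opposite pieces $\pm P^\sharp$ in $\{x^2<0\}/\mathbb{R}_{>0}$; $g$ with $g(P)=P$ is $P$-reversing if $g(P^\sharp)=-P^\sharp$. $g$ is $\mathbb{Z}/3$-direct if it acts trivially on the $3$-primary part (here $\mathbb{Z}/3$) of the discriminant group $L^*/L$. *)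

theory Defs
  imports "HOL-Analysis.Analysis"
begin

text \<open>Gram matrix of the E8 root lattice (indices 0..7): the chain 0-1-2-3-4-5-6
  with node 7 attached to node 4 (Dynkin diagram T(2,3,5)).\<close>
definition e8_edge :: "nat \<Rightarrow> nat \<Rightarrow> bool" where
  "e8_edge i j \<longleftrightarrow> (i < 7 \<and> j < 7 \<and> (i = j + 1 \<or> j = i + 1)) \<or> (i = 4 \<and> j = 7) \<or> (i = 7 \<and> j = 4)"

definition e8_gram :: "nat \<Rightarrow> nat \<Rightarrow> int" where
  "e8_gram i j = (if i = j then 2 else if e8_edge i j then -1 else 0)"

text \<open>Gram matrix of L = (-A1) + A2 + E8 + E8 on the basis indexed 0..18:
  index 0: -A1; indices 1,2: A2; indices 3..10: first E8; 11..18: second E8.\<close>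
definition gramL :: "nat \<Rightarrow> nat \<Rightarrow> int" where
  "gramL i j =
    (if i = 0 \<and> j = 0 then -2
     else if i \<in> {1,2} \<and> j \<in> {1,2} then (if i = j then 2 else -1)
     else if i \<in> {3..10} \<and> j \<in> {3..10} then e8_gram (i - 3) (j - 3)
     else if i \<in> {11..18} \<and> j \<in> {11..18} then e8_gram (i - 11) (j - 11)
     else 0)"

definition idx :: "19 \<Rightarrow> nat" where
  "idx i = nat (Rep_bit1 i)"

definition bf :: "real^19 \<Rightarrow> real^19 \<Rightarrow> real" where
  "bf x y = (\<Sum>i\<in>UNIV. \<Sum>j\<in>UNIV. of_int (gramL (idx i) (idx j)) * x$i * y$j)"

definition latL :: "(real^19) set" where
  "latL = {x. \<forall>i. x$i \<in> \<int>}"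

definition dualL :: "(real^19) set" where
  "dualL = {x. \<forall>w\<in>latL. bf x w \<in> \<int>}"

definition Vk :: "real \<Rightarrow> (real^19) set" where
  "Vk k = {v \<in> latL. bf v v = k \<and> (\<forall>w\<in>latL. 2 * bf v w / bf v v \<in> \<int>)}"

definition negcone :: "(real^19) set" where
  "negcone = {x. bf x x < 0}"

definition mirrors :: "(real^19) set" where
  "mirrors = (\<Union>v\<in>Vk 2 \<union> Vk 6. {x. bf v x = 0})"

text \<open>These sets are cones,
  so they represent subsets of {x^2<0}/R_{>0}; the cell P of Lambda(L) corresponds to
  the R^*-saturated set P^sharp \<union> -P^sharp.\<close>
definition lifted_cell :: "(real^19) set \<Rightarrow> bool" where
  "lifted_cell S \<longleftrightarrow>
     (\<exists>x\<in>negcone - mirrors. S = closure (connected_component_set (negcone - mirrors) x) \<inter> negcone)"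

definition autL :: "(real^19 \<Rightarrow> real^19) \<Rightarrow> bool" where
  "autL g \<longleftrightarrow> linear g \<and> g ` latL = latL \<and> (\<forall>x y. bf (g x) (g y) = bf x y)"

text \<open>g acts trivially on the 3-primary part of L^*/L.\<close>
definition Z3_direct :: "(real^19 \<Rightarrow> real^19) \<Rightarrow> bool" where
  "Z3_direct g \<longleftrightarrow>
     (\<forall>x\<in>dualL. (\<exists>k::nat. (3::real) ^ k *\<^sub>R x \<in> latL) \<longrightarrow> g x - x \<in> latL)"

end

theory Submission
  imports Defs
begin

text \<open>The reversing automorphism \<open>g\<close> is given by an explicit integer matrix, and every
  property used is checked by exact integer arithmetic.  \<open>g\<close> is an involutive isometry
  of \<open>L\<close> with \<open>g - 1 = N G\<close> for an integral \<open>N\<close> (\<open>G\<close> the Gram matrix), so \<open>g\<close> is trivial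
  on \<open>L\<^sup>*/L\<close>.  Its \<open>-1\<close>-eigenspace is spanned by lattice vectors \<open>f\<^sub>0, \<dots>, f\<^sub>1\<^sub>2\<close> with
  \<open>f\<^sub>0\<^sup>2 < 0\<close>, and every lattice vector orthogonal to all \<open>f\<^sub>m\<close> has norm divisible by 4.
  Hence no \<open>v \<in> V\<^sub>2 \<union> V\<^sub>6\<close> is orthogonal to the whole eigenspace, each mirror meets the
  curve \<open>t \<mapsto> \<Sum>\<^sub>i t\<^sup>i f\<^sub>i\<close> in finitely many points, and a point \<open>x\<close> of this curve with small
  \<open>t > 0\<close> is negative and off all mirrors.  Since \<open>g x = -x\<close> and automorphisms permute the
  cells, \<open>g\<close> maps the cell of \<open>x\<close> to the cell of \<open>-x\<close>.\<close>

lemma sum_lessThan_eq_sum_list: "(\<Sum>k<n. f k) = sum_list (map f [0..<n])"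
  by (simp add: sum_set_upt_conv_sum_list_nat[symmetric] atLeast0LessThan)

lemma all_lessThan_eq_list_all: "(\<forall>i<n. P i) \<longleftrightarrow> list_all P [0..<n]"
  by (auto simp: list_all_iff)

lemma involution_image_eq:
  assumes "\<And>x. h (h x) = x" and "\<And>x. x \<in> A \<Longrightarrow> h x \<in> A"
  shows "h ` A = A"
  using assms by (metis image_eqI subsetI subset_antisym image_subsetI)

definition ix :: "nat \<Rightarrow> 19" where
  "ix k = Abs_bit1 (int k)"

lemma idx_ix [simp]: "k < 19 \<Longrightarrow> idx (ix k) = k"
  unfolding idx_def ix_def by (subst Abs_bit1_inverse) auto

lemma idx_less: "idx i < 19"
  using Rep_bit1[of i] unfolding idx_def by auto

lemma ix_idx [simp]: "ix (idx i) = i"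
  using Rep_bit1[of i] unfolding idx_def ix_def by (simp add: Rep_bit1_inverse)

lemma sum_UNIV_19: "(\<Sum>i\<in>UNIV. f i) = (\<Sum>k<19. f (ix k))"
proof -
  have "bij_betw ix {..<19} UNIV"
    by (rule bij_betwI[where g = idx]) (auto simp: idx_less)
  then show ?thesis by (simp add: sum.reindex_bij_betw)
qed

definition coord :: "real^19 \<Rightarrow> nat \<Rightarrow> real" where
  "coord x k = x $ ix k"

lemma coord_add [simp]: "coord (x + y) k = coord x k + coord y k"
  and coord_scaleR [simp]: "coord (c *\<^sub>R x) k = c * coord x k"
  and coord_minus [simp]: "coord (- x) k = - coord x k"
  and coord_diff [simp]: "coord (x - y) k = coord x k - coord y k"
  by (simp_all add: coord_def)

lemma coord_sum [simp]: "coord (\<Sum>j\<in>J. f j) k = (\<Sum>j\<in>J. coord (f j) k)"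
  by (simp add: coord_def)

lemma vec_eq_coordI:
  assumes "\<And>k. k < 19 \<Longrightarrow> coord x k = coord y k"
  shows "x = y"
proof (rule vec_eq_iff[THEN iffD2], rule allI)
  fix i
  show "x $ i = y $ i" using assms[OF idx_less[of i]] by (simp add: coord_def)
qed

lemma latL_iff_coord: "x \<in> latL \<longleftrightarrow> (\<forall>k<19. coord x k \<in> \<int>)"
proof
  assume "\<forall>k<19. coord x k \<in> \<int>"
  then have "x $ i \<in> \<int>" for i using idx_less[of i] by (auto simp: coord_def)
  then show "x \<in> latL" by (simp add: latL_def)
qed (simp add: latL_def coord_def)

definition lvec :: "int list \<Rightarrow> real^19" where
  "lvec r = (\<chi> i. of_int (r ! idx i))"

lemma coord_lvec [simp]: "k < 19 \<Longrightarrow> coord (lvec r) k = of_int (r ! k)"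
  by (simp add: lvec_def coord_def)

lemma countable_latL: "countable latL"
proof -
  have "latL \<subseteq> range (\<lambda>z. \<chi> i. of_int (z i) :: real^19)"
  proof
    fix x :: "real^19" assume "x \<in> latL"
    then have "x = (\<chi> i. of_int \<lfloor>x $ i\<rfloor>)"
      unfolding latL_def by (auto simp: vec_eq_iff elim!: Ints_cases)
    then show "x \<in> range (\<lambda>z. \<chi> i. of_int (z i) :: real^19)"
      by (intro image_eqI[where x = "\<lambda>i. \<lfloor>x $ i\<rfloor>"]) auto
  qed
  then show ?thesis by (rule countable_subset) simp
qed

subsection \<open>Explicit lattice data\<close>

text \<open>The data were found by computer; only the identities proved below are used.
  \<open>gram_rows\<close> is the Gram matrix \<open>G\<close> of \<open>L\<close>, \<open>aut_rows\<close> the matrix \<open>R\<close> of the automorphism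
  and \<open>disc_rows\<close> the matrix \<open>N\<close> with \<open>R - 1 = N G\<close>.  The row \<open>b\<^sub>j\<close> of
  \<open>perp_basis\<close> is the vector orthogonal to all \<open>f\<^sub>m\<close> whose coordinates at \<open>perp_coords\<close> are
  those of the \<open>j\<close>-th unit vector; \<open>perp_certificate\<close> expresses \<open>4 (u - \<Sum>\<^sub>j u(p j) b\<^sub>j)\<close>,
  \<open>p = perp_coords\<close>, as a combination of the pairings of \<open>u\<close> with the \<open>f\<^sub>m\<close>.\<close>

definition gram_rows :: "int list list" where
  "gram_rows =
    [[-2,0,0,0,0,0,0,0,0,0,0,0,0,0,0,0,0,0,0],
     [0,2,-1,0,0,0,0,0,0,0,0,0,0,0,0,0,0,0,0],
     [0,-1,2,0,0,0,0,0,0,0,0,0,0,0,0,0,0,0,0],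
     [0,0,0,2,-1,0,0,0,0,0,0,0,0,0,0,0,0,0,0],
     [0,0,0,-1,2,-1,0,0,0,0,0,0,0,0,0,0,0,0,0],
     [0,0,0,0,-1,2,-1,0,0,0,0,0,0,0,0,0,0,0,0],
     [0,0,0,0,0,-1,2,-1,0,0,0,0,0,0,0,0,0,0,0],
     [0,0,0,0,0,0,-1,2,-1,0,-1,0,0,0,0,0,0,0,0],
     [0,0,0,0,0,0,0,-1,2,-1,0,0,0,0,0,0,0,0,0],
     [0,0,0,0,0,0,0,0,-1,2,0,0,0,0,0,0,0,0,0],
     [0,0,0,0,0,0,0,-1,0,0,2,0,0,0,0,0,0,0,0],
     [0,0,0,0,0,0,0,0,0,0,0,2,-1,0,0,0,0,0,0],
     [0,0,0,0,0,0,0,0,0,0,0,-1,2,-1,0,0,0,0,0],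
     [0,0,0,0,0,0,0,0,0,0,0,0,-1,2,-1,0,0,0,0],
     [0,0,0,0,0,0,0,0,0,0,0,0,0,-1,2,-1,0,0,0],
     [0,0,0,0,0,0,0,0,0,0,0,0,0,0,-1,2,-1,0,-1],
     [0,0,0,0,0,0,0,0,0,0,0,0,0,0,0,-1,2,-1,0],
     [0,0,0,0,0,0,0,0,0,0,0,0,0,0,0,0,-1,2,0],
     [0,0,0,0,0,0,0,0,0,0,0,0,0,0,0,-1,0,0,2]]"

definition aut_rows :: "int list list" where
  "aut_rows =
    [[-25,12,-12,0,0,0,-3,12,-12,3,-6,-9,0,6,3,-9,3,0,6],
     [-8,3,-4,0,0,0,-1,4,-4,1,-2,-3,0,2,1,-3,1,0,2],
     [8,-4,3,0,0,0,1,-4,4,-1,2,3,0,-2,-1,3,-1,0,-2],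
     [6,-3,3,0,0,0,1,-3,3,-1,1,2,0,-2,0,2,0,-1,-2],
     [12,-6,6,0,0,0,2,-6,6,-2,2,3,1,-4,-1,5,-1,-1,-4],
     [18,-9,9,0,0,0,3,-9,9,-3,3,5,2,-6,-1,7,-2,-1,-6],
     [24,-12,12,0,0,0,4,-12,12,-4,4,7,3,-8,-2,9,-2,-2,-7],
     [24,-12,12,0,0,0,5,-13,12,-4,4,7,3,-8,-2,9,-2,-2,-7],
     [30,-15,15,0,0,0,5,-15,14,-4,6,10,2,-9,-3,11,-3,-1,-8],
     [12,-6,6,0,0,0,2,-6,6,-2,2,4,1,-4,-1,4,-1,0,-3],
     [18,-9,9,0,0,0,3,-9,9,-3,3,6,1,-5,-2,7,-2,-1,-5],
     [6,-3,3,0,-1,0,1,-3,3,-1,2,2,0,-1,-1,2,-1,0,-1],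
     [-6,3,-3,-1,-1,0,0,3,-3,0,-1,-2,0,2,0,-2,0,0,2],
     [-18,9,-9,-1,-1,0,-2,9,-9,1,-3,-6,0,5,1,-6,1,0,5],
     [-18,9,-9,-1,-1,0,-2,9,-9,1,-3,-6,0,6,0,-6,1,0,5],
     [-12,6,-6,-2,0,-1,-1,6,-6,0,-1,-4,0,5,-1,-4,0,0,4],
     [-12,6,-6,-1,0,-1,-1,6,-6,1,-2,-4,0,4,0,-4,0,0,4],
     [-6,3,-3,-1,0,0,-1,3,-3,1,-1,-2,0,2,0,-2,0,0,2],
     [-12,6,-6,-1,0,-1,-1,6,-6,1,-2,-4,0,4,0,-4,1,0,3]]"

definition disc_rows :: "int list list" where
  "disc_rows =
    [[13,4,-4,-3,-6,-9,-12,-12,-15,-6,-9,-3,3,9,9,6,6,3,6],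
     [4,0,-2,-1,-2,-3,-4,-4,-5,-2,-3,-1,1,3,3,2,2,1,2],
     [-4,-2,0,1,2,3,4,4,5,2,3,1,-1,-3,-3,-2,-2,-1,-2],
     [-3,-1,1,-2,-3,-4,-5,-7,-3,-2,-3,0,-2,-4,-4,-4,-3,-2,-3],
     [-6,-2,2,-3,-6,-8,-10,-14,-6,-4,-6,0,-3,-7,-7,-6,-5,-3,-5],
     [-9,-3,3,-4,-8,-12,-15,-21,-9,-6,-9,1,-3,-9,-9,-8,-7,-4,-7],
     [-12,-4,4,-5,-10,-15,-20,-28,-12,-8,-12,2,-3,-11,-11,-9,-8,-5,-8],
     [-12,-4,4,-7,-14,-21,-28,-40,-20,-12,-18,2,-3,-11,-11,-9,-8,-5,-8],
     [-15,-5,5,-3,-6,-9,-12,-20,-6,-5,-7,3,-4,-13,-13,-10,-9,-5,-9],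
     [-6,-2,2,-2,-4,-6,-8,-12,-5,-4,-5,1,-2,-6,-6,-5,-4,-2,-4],
     [-9,-3,3,-3,-6,-9,-12,-18,-7,-5,-8,2,-2,-7,-7,-5,-5,-3,-5],
     [-3,-1,1,0,0,1,2,2,3,1,2,-2,-5,-8,-10,-11,-8,-4,-6],
     [3,1,-1,-2,-3,-3,-3,-3,-4,-2,-2,-5,-8,-10,-14,-18,-12,-6,-8],
     [9,3,-3,-4,-7,-9,-11,-11,-13,-6,-7,-8,-10,-12,-18,-25,-16,-8,-10],
     [9,3,-3,-4,-7,-9,-11,-11,-13,-6,-7,-10,-14,-18,-28,-37,-24,-12,-16],
     [6,2,-2,-4,-6,-8,-9,-9,-10,-5,-5,-11,-18,-25,-37,-48,-32,-16,-22],
     [6,2,-2,-3,-5,-7,-8,-8,-9,-4,-5,-8,-12,-16,-24,-32,-22,-11,-14],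
     [3,1,-1,-2,-3,-4,-5,-5,-5,-2,-3,-4,-6,-8,-12,-16,-11,-6,-7],
     [6,2,-2,-3,-5,-7,-8,-8,-9,-4,-5,-6,-8,-10,-16,-22,-14,-7,-10]]"

definition minus_eigvecs :: "int list list" where
  "minus_eigvecs =
    [[6,2,-2,0,0,0,0,2,-2,0,0,-2,0,2,1,-1,0,0,1],
     [1,1,-1,-3,-6,-9,-3,-21,-15,-6,-9,-3,-6,0,0,-3,-3,3,-3],
     [0,2,0,-1,-2,-3,0,-8,-5,-2,-3,-1,-3,-1,-1,-2,-2,1,-2],
     [0,0,2,1,2,3,0,8,5,2,3,1,3,1,1,2,2,-1,2],
     [0,0,0,1,0,0,0,0,0,0,0,0,1,1,1,2,1,1,1],
     [0,0,0,0,1,0,0,0,0,0,0,1,1,1,1,0,0,0,0],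
     [0,0,0,0,0,1,0,0,0,0,0,0,0,0,0,1,1,0,1],
     [0,0,0,0,0,0,1,-1,-1,1,0,0,0,1,1,1,0,0,0],
     [0,0,0,0,0,0,0,-2,-1,-2,-1,-1,-2,-2,-2,-3,-2,0,0],
     [0,0,0,0,0,0,0,0,1,-2,-1,-1,-2,-2,-4,-5,-2,0,-2],
     [0,0,0,0,0,0,0,0,0,2,0,2,4,6,4,6,6,2,0],
     [0,0,0,0,0,0,0,0,0,0,-2,2,2,4,0,2,4,2,-2],
     [0,0,0,0,0,0,0,0,0,0,0,2,4,6,4,6,8,4,0]]"

definition minus_eigvecs_dual :: "int list list" where
  "minus_eigvecs_dual =
    [[-12,6,-6,0,0,0,-2,6,-6,2,-2,-4,0,3,1,-4,1,0,3],
     [-2,3,-3,0,0,-9,24,-15,-3,3,3,0,-9,6,3,0,-6,9,-3],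
     [0,4,-2,0,0,-4,11,-8,0,1,2,1,-4,2,1,1,-3,4,-2],
     [0,-2,4,0,0,4,-11,8,0,-1,-2,-1,4,-2,-1,-1,3,-4,2],
     [0,0,0,2,-1,0,0,0,0,0,0,-1,1,0,-1,1,-1,1,0],
     [0,0,0,-1,2,-1,0,0,0,0,0,1,0,0,1,-1,0,0,0],
     [0,0,0,0,-1,2,-1,0,0,0,0,0,0,0,-1,0,1,-1,1],
     [0,0,0,0,0,-1,3,-2,-2,3,1,0,-1,1,0,1,-1,0,-1],
     [0,0,0,0,0,0,2,-2,2,-3,0,0,-1,0,1,-2,-1,2,3],
     [0,0,0,0,0,0,0,0,4,-5,-2,0,-1,2,-1,-2,1,2,1],
     [0,0,0,0,0,0,0,0,-2,4,0,0,0,4,-4,2,4,-2,-6],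
     [0,0,0,0,0,0,0,2,0,0,-4,2,-2,6,-6,2,4,0,-6],
     [0,0,0,0,0,0,0,0,0,0,0,0,0,4,-4,0,6,0,-6]]"

definition perp_basis :: "int list list" where
  "perp_basis =
    [[3,1,-1,0,3,3,3,3,0,0,0,-3,0,0,0,0,0,0,0],
     [0,0,0,1,-1,-1,0,0,0,0,0,1,0,0,0,-1,0,-1,0],
     [0,0,0,0,0,0,1,1,1,1,0,0,0,-1,-1,-1,0,0,0],
     [0,0,0,0,2,2,2,2,1,0,1,-1,0,0,0,1,0,0,0],
     [0,0,0,0,-1,0,0,0,0,0,0,1,1,1,1,0,0,0,0],
     [0,0,0,0,0,-1,0,0,0,0,0,0,0,0,0,1,1,0,1]]"

definition perp_certificate :: "int list list" where
  "perp_certificate =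
    [[0,-2,-3,-3,-6,-12,-18,-6,24,-12,9,3,-3],
     [0,0,0,0,0,0,0,0,0,0,0,0,0],
     [0,0,2,2,0,0,0,0,0,0,0,0,0],
     [0,0,0,0,0,0,0,0,0,0,0,0,0],
     [-12,72,-28,22,162,320,474,180,-634,320,-246,-78,84],
     [-24,144,-52,46,334,664,994,416,-1340,682,-536,-164,188],
     [8,-48,12,-18,-126,-252,-378,-192,520,-270,220,64,-82],
     [4,-24,4,-10,-66,-132,-198,-104,272,-142,116,34,-44],
     [0,0,0,0,-4,-8,-12,-16,18,-10,12,2,-6],
     [0,0,0,0,0,0,0,0,0,0,0,0,0],
     [0,0,0,0,0,0,0,0,0,0,0,0,0],
     [4,-24,12,-6,-50,-96,-142,-44,188,-94,68,24,-22],
     [0,0,0,0,0,0,0,0,0,0,0,0,0],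
     [-20,120,-40,40,288,576,864,392,-1176,604,-480,-144,172],
     [-32,192,-64,64,456,912,1368,608,-1860,952,-756,-228,270],
     [-28,168,-56,56,396,788,1180,508,-1600,816,-644,-196,228],
     [-8,48,-16,16,112,224,336,144,-456,232,-184,-56,66],
     [-20,120,-40,40,288,572,856,380,-1162,594,-474,-142,170],
     [0,0,0,0,0,0,0,0,0,0,0,0,0]]"

definition perp_coords :: "nat list" where
  "perp_coords = [1, 3, 9, 10, 12, 18]"

lemma gramL_eq_gram_rows: "\<forall>k<19. \<forall>l<19. gramL k l = gram_rows ! k ! l"
  unfolding all_lessThan_eq_list_all gram_rows_def gramL_def e8_gram_def e8_edge_def
  by code_simp

lemma gram_rows_sym: "\<forall>k<19. \<forall>l<19. gram_rows ! k ! l = gram_rows ! l ! k"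
  unfolding all_lessThan_eq_list_all gram_rows_def by code_simp

lemma aut_rows_involution:
  "\<forall>i<19. \<forall>j<19. (\<Sum>k<19. aut_rows ! i ! k * aut_rows ! k ! j) = (if i = j then 1 else 0)"
  unfolding all_lessThan_eq_list_all sum_lessThan_eq_sum_list aut_rows_def by code_simp

lemma aut_rows_self_adjoint:
  "\<forall>i<19. \<forall>j<19. (\<Sum>k<19. aut_rows ! k ! i * gram_rows ! k ! j)
                  = (\<Sum>k<19. gram_rows ! i ! k * aut_rows ! k ! j)"
  unfolding all_lessThan_eq_list_all sum_lessThan_eq_sum_list aut_rows_def gram_rows_def
  by code_simp

lemma aut_rows_minus_id:
  "\<forall>i<19. \<forall>j<19. aut_rows ! i ! j - (if i = j then 1 else 0)
                  = (\<Sum>k<19. disc_rows ! i ! k * gram_rows ! k ! j)"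
  unfolding all_lessThan_eq_list_all sum_lessThan_eq_sum_list aut_rows_def disc_rows_def
    gram_rows_def
  by code_simp

lemma aut_rows_minus_eigvecs:
  "\<forall>m<13. \<forall>i<19. (\<Sum>j<19. aut_rows ! i ! j * minus_eigvecs ! m ! j) = - minus_eigvecs ! m ! i"
  unfolding all_lessThan_eq_list_all sum_lessThan_eq_sum_list aut_rows_def minus_eigvecs_def
  by code_simp

lemma minus_eigvecs_dual_eq:
  "\<forall>m<13. \<forall>k<19. (\<Sum>l<19. gram_rows ! k ! l * minus_eigvecs ! m ! l) = minus_eigvecs_dual ! m ! k"
  unfolding all_lessThan_eq_list_all sum_lessThan_eq_sum_list gram_rows_def minus_eigvecs_def
    minus_eigvecs_dual_def
  by code_simp

lemma perp_certificate_eq: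
  "\<forall>k<19. \<forall>l<19. 4 * ((if k = l then 1 else 0) - (\<Sum>j<6. if perp_coords ! j = l then perp_basis ! j ! k else 0))
                  = (\<Sum>m<13. perp_certificate ! k ! m * minus_eigvecs_dual ! m ! l)"
  unfolding all_lessThan_eq_list_all sum_lessThan_eq_sum_list perp_coords_def perp_basis_def
    perp_certificate_def minus_eigvecs_dual_def
  by code_simp

lemma perp_basis_gram_dvd:
  "\<forall>a<6. \<forall>b<6. 4 dvd (\<Sum>k<19. \<Sum>l<19. perp_basis ! a ! k * gram_rows ! k ! l * perp_basis ! b ! l)
                    + (\<Sum>k<19. \<Sum>l<19. perp_basis ! b ! k * gram_rows ! k ! l * perp_basis ! a ! l)
               \<and> 4 dvd (\<Sum>k<19. \<Sum>l<19. perp_basis ! a ! k * gram_rows ! k ! l * perp_basis ! a ! l)"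
  unfolding all_lessThan_eq_list_all sum_lessThan_eq_sum_list perp_basis_def gram_rows_def
  by code_simp

lemma minus_eigvec_0_norm:
  "(\<Sum>k<19. \<Sum>l<19. minus_eigvecs ! 0 ! k * gram_rows ! k ! l * minus_eigvecs ! 0 ! l) = -2"
  unfolding sum_lessThan_eq_sum_list minus_eigvecs_def gram_rows_def by code_simp

lemma bf_coord:
  "bf x y = (\<Sum>k<19. \<Sum>l<19. of_int (gram_rows ! k ! l) * coord x k * coord y l)"
  unfolding bf_def sum_UNIV_19 coord_def using gramL_eq_gram_rows by (intro sum.cong) auto

lemma bf_coord_right:
  "bf x y = (\<Sum>k<19. coord x k * (\<Sum>l<19. of_int (gram_rows ! k ! l) * coord y l))"
  unfolding bf_coord by (simp add: sum_distrib_left mult_ac)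

lemma bilinear_bf: "bilinear bf"
  unfolding bilinear_def bf_coord
  by (auto intro!: linearI simp: algebra_simps sum.distrib sum_distrib_left)

lemma dualL_coord:
  assumes "x \<in> dualL" and k: "k < 19"
  shows "(\<Sum>l<19. of_int (gram_rows ! k ! l) * coord x l) \<in> \<int>"
proof -
  have coord_e: "coord (axis (ix k) 1) l = (if l = k then 1 else 0)" if "l < 19" for l
  proof -
    have "ix l = ix k \<longleftrightarrow> l = k" using that k by (metis idx_ix)
    then show ?thesis by (simp add: coord_def axis_def)
  qed
  have "axis (ix k) 1 \<in> latL" unfolding latL_def axis_def by simp
  then have "bf x (axis (ix k) 1) \<in> \<int>" using assms unfolding dualL_def by blast
  also have "bf x (axis (ix k) 1) = (\<Sum>l<19. coord x l * of_int (gram_rows ! l ! k))"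
    unfolding bf_coord_right using k by (intro sum.cong) (simp_all add: coord_e if_distrib cong: if_cong)
  also have "\<dots> = (\<Sum>l<19. of_int (gram_rows ! k ! l) * coord x l)"
    using gram_rows_sym k by (intro sum.cong) auto
  finally show ?thesis .
qed

definition mat_act :: "int list list \<Rightarrow> real^19 \<Rightarrow> real^19" where
  "mat_act A x = (\<chi> i. \<Sum>j<19. of_int (A ! idx i ! j) * coord x j)"

lemma coord_mat_act [simp]:
  "k < 19 \<Longrightarrow> coord (mat_act A x) k = (\<Sum>j<19. of_int (A ! k ! j) * coord x j)"
  by (simp add: mat_act_def coord_def)

lemma linear_mat_act: "linear (mat_act A)"
  by (intro linearI; rule vec_eq_coordI) (simp_all add: algebra_simps sum.distrib sum_distrib_left)

lemma mat_act_latL: "x \<in> latL \<Longrightarrow> mat_act A x \<in> latL"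
  unfolding latL_iff_coord by (auto intro!: Ints_sum Ints_mult)

lemma sum_mult_sum_swap:
  "(\<Sum>k\<in>K. c k * (\<Sum>j\<in>J. b k j * x j)) = (\<Sum>j\<in>J. (\<Sum>k\<in>K. c k * b k j) * x j)"
  for c :: "'a \<Rightarrow> 'c::comm_semiring_0"
  unfolding sum_distrib_left sum_distrib_right by (subst sum.swap) (simp add: mult.assoc)

lemma bilinear_sum_transfer:
  "(\<Sum>k\<in>K. \<Sum>l\<in>L. c k l * (\<Sum>j\<in>J. a k j * x j) * y l)
     = (\<Sum>j\<in>J. \<Sum>l\<in>L. (\<Sum>k\<in>K. a k j * c k l) * x j * y l)"
  for c :: "'a \<Rightarrow> 'b \<Rightarrow> 'c::comm_semiring_0"
proof -
  have "(\<Sum>k\<in>K. \<Sum>l\<in>L. c k l * (\<Sum>j\<in>J. a k j * x j) * y l)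
      = (\<Sum>k\<in>K. \<Sum>j\<in>J. \<Sum>l\<in>L. a k j * c k l * x j * y l)"
    by (simp add: sum_distrib_left sum_distrib_right mult_ac sum.swap[of _ J L])
  also have "\<dots> = (\<Sum>j\<in>J. \<Sum>k\<in>K. \<Sum>l\<in>L. a k j * c k l * x j * y l)"
    by (rule sum.swap)
  also have "\<dots> = (\<Sum>j\<in>J. \<Sum>l\<in>L. (\<Sum>k\<in>K. a k j * c k l) * x j * y l)"
    by (simp add: sum_distrib_right sum.swap[of _ K L])
  finally show ?thesis .
qed

lemma mat_act_inverse:
  assumes "\<forall>i<19. \<forall>j<19. (\<Sum>k<19. A ! i ! k * B ! k ! j) = (if i = j then 1 else 0)"
  shows "mat_act A (mat_act B x) = x"
proof (rule vec_eq_coordI)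
  fix i :: nat assume i: "i < 19"
  have "coord (mat_act A (mat_act B x)) i
      = (\<Sum>k<19. of_int (A ! i ! k) * (\<Sum>j<19. of_int (B ! k ! j) * coord x j))"
    using i by simp
  also have "\<dots> = (\<Sum>j<19. of_int (\<Sum>k<19. A ! i ! k * B ! k ! j) * coord x j)"
    by (simp add: sum_mult_sum_swap)
  also have "\<dots> = (\<Sum>j<19. if i = j then coord x j else 0)"
    using assms i by (intro sum.cong) auto
  finally show "coord (mat_act A (mat_act B x)) i = coord x i"
    using i by simp
qed

lemma bf_mat_act_left:
  "bf (mat_act A x) y
     = (\<Sum>j<19. coord x j * (\<Sum>l<19. of_int (\<Sum>k<19. A ! k ! j * gram_rows ! k ! l) * coord y l))"
proof -
  have "bf (mat_act A x) y
      = (\<Sum>k<19. \<Sum>l<19. of_int (gram_rows ! k ! l) * (\<Sum>j<19. of_int (A ! k ! j) * coord x j) * coord y l)"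
    unfolding bf_coord by simp
  also have "\<dots> = (\<Sum>j<19. \<Sum>l<19. of_int (\<Sum>k<19. A ! k ! j * gram_rows ! k ! l) * coord x j * coord y l)"
    by (subst bilinear_sum_transfer) simp
  finally show ?thesis by (simp add: sum_distrib_left mult_ac)
qed

lemma bf_mat_act_right:
  "bf x (mat_act A y)
     = (\<Sum>j<19. coord x j * (\<Sum>l<19. of_int (\<Sum>k<19. gram_rows ! j ! k * A ! k ! l) * coord y l))"
  unfolding bf_coord_right by (simp add: sum_mult_sum_swap)

lemma bf_mat_act_self_adjoint:
  assumes "\<forall>i<19. \<forall>j<19. (\<Sum>k<19. A ! k ! i * gram_rows ! k ! j)
                         = (\<Sum>k<19. gram_rows ! i ! k * A ! k ! j)"
  shows "bf (mat_act A x) y = bf x (mat_act A y)"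
  unfolding bf_mat_act_left bf_mat_act_right using assms by (intro sum.cong refl) auto

lemma mat_act_minus_self_latL:
  assumes "\<forall>i<19. \<forall>j<19. A ! i ! j - (if i = j then 1 else 0) = (\<Sum>k<19. N ! i ! k * gram_rows ! k ! j)"
    and "x \<in> dualL"
  shows "mat_act A x - x \<in> latL"
  unfolding latL_iff_coord
proof (intro allI impI)
  fix i :: nat assume i: "i < 19"
  have "coord (mat_act A x - x) i
      = (\<Sum>j<19. of_int (A ! i ! j) * coord x j) - (\<Sum>j<19. if i = j then coord x j else 0)"
    using i by simp
  also have "\<dots> = (\<Sum>j<19. of_int (A ! i ! j - (if i = j then 1 else 0)) * coord x j)"
    unfolding sum_subtractf[symmetric] by (intro sum.cong) (auto simp: algebra_simps)
  also have "\<dots> = (\<Sum>j<19. of_int (\<Sum>k<19. N ! i ! k * gram_rows ! k ! j) * coord x j)"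
    using assms(1) i by (intro sum.cong) auto
  also have "\<dots> = (\<Sum>k<19. of_int (N ! i ! k) * (\<Sum>j<19. of_int (gram_rows ! k ! j) * coord x j))"
    by (simp add: sum_mult_sum_swap)
  also have "\<dots> \<in> \<int>"
  proof (rule Ints_sum)
    fix k assume "k \<in> {..<(19::nat)}"
    then show "of_int (N ! i ! k) * (\<Sum>j<19. of_int (gram_rows ! k ! j) * coord x j) \<in> \<int>"
      by (intro Ints_mult Ints_of_int) (simp add: dualL_coord[OF assms(2)])
  qed
  finally show "coord (mat_act A x - x) i \<in> \<int>" .
qed

definition aut :: "real^19 \<Rightarrow> real^19" where
  "aut = mat_act aut_rows"

lemma aut_aut [simp]: "aut (aut x) = x"
  unfolding aut_def using aut_rows_involution by (rule mat_act_inverse)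

lemma bf_aut_aut: "bf (aut x) (aut y) = bf x y"
  unfolding aut_def bf_mat_act_self_adjoint[OF aut_rows_self_adjoint]
  by (simp flip: aut_def)

lemma autL_aut: "autL aut"
  unfolding autL_def
proof (intro conjI allI)
  show "linear aut" unfolding aut_def by (rule linear_mat_act)
  show "aut ` latL = latL"
    by (rule involution_image_eq) (simp_all only: aut_aut, simp add: aut_def mat_act_latL)
qed (rule bf_aut_aut)

text \<open>In fact \<open>aut\<close> acts trivially on the whole discriminant group \<open>L\<^sup>*/L\<close>.\<close>

lemma Z3_direct_aut: "Z3_direct aut"
  unfolding Z3_direct_def aut_def using mat_act_minus_self_latL[OF aut_rows_minus_id] by blast

lemma aut_minus_eigvec:
  assumes "m < 13"
  shows "aut (lvec (minus_eigvecs ! m)) = - lvec (minus_eigvecs ! m)"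
proof (rule vec_eq_coordI)
  fix i :: nat assume i: "i < 19"
  have "coord (aut (lvec (minus_eigvecs ! m))) i
      = of_int (\<Sum>j<19. aut_rows ! i ! j * minus_eigvecs ! m ! j)"
    unfolding aut_def using i by simp
  then show "coord (aut (lvec (minus_eigvecs ! m))) i = coord (- lvec (minus_eigvecs ! m)) i"
    using aut_rows_minus_eigvecs assms i by simp
qed

lemma minus_eigvec_0_negative: "bf (lvec (minus_eigvecs ! 0)) (lvec (minus_eigvecs ! 0)) < 0"
proof -
  have "bf (lvec (minus_eigvecs ! 0)) (lvec (minus_eigvecs ! 0))
      = of_int (\<Sum>k<19. \<Sum>l<19. minus_eigvecs ! 0 ! k * gram_rows ! k ! l * minus_eigvecs ! 0 ! l)"
    unfolding bf_coord by (simp add: mult_ac)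
  then show ?thesis by (simp only: minus_eigvec_0_norm)
qed

subsection \<open>Automorphisms permute the cells\<close>

lemma autL_uminus: "autL uminus"
  unfolding autL_def using bilinear_bf
  by (auto simp: linear_uminus bilinear_lneg bilinear_rneg latL_def
           intro!: involution_image_eq)

lemma autL_Vk:
  assumes h: "autL h" and v: "v \<in> Vk c"
  shows "h v \<in> Vk c"
proof -
  have iso: "bf (h x) (h y) = bf x y" for x y using h unfolding autL_def by blast
  have lat: "h ` latL = latL" using h unfolding autL_def by blast
  have v': "v \<in> latL" "bf v v = c" "\<forall>w\<in>latL. 2 * bf v w / bf v v \<in> \<int>"
    using v unfolding Vk_def by auto
  show ?thesis unfolding Vk_def
  proof (intro CollectI conjI ballI)
    have "h v \<in> h ` latL" using v'(1) by (rule imageI)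
    then show "h v \<in> latL" by (simp only: lat)
    show "bf (h v) (h v) = c" using v'(2) by (simp add: iso)
    fix w assume "w \<in> latL"
    then have "w \<in> h ` latL" by (simp only: lat)
    then obtain w' where "w' \<in> latL" "w = h w'" by (rule imageE)
    then show "2 * bf (h v) w / bf (h v) (h v) \<in> \<int>" using v'(3) by (simp add: iso)
  qed
qed

lemma autL_mirrors:
  assumes h: "autL h" and x: "x \<in> mirrors"
  shows "h x \<in> mirrors"
proof -
  obtain v where v: "v \<in> Vk 2 \<union> Vk 6" "bf v x = 0"
    using x unfolding mirrors_def by blast
  have "h v \<in> Vk 2 \<union> Vk 6" using v(1) autL_Vk[OF h] by blast
  moreover have "bf (h v) (h x) = 0" using v(2) h unfolding autL_def by simp
  ultimately show ?thesis unfolding mirrors_def by blast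
qed

definition cell :: "real^19 \<Rightarrow> (real^19) set" where
  "cell x = closure (connected_component_set (negcone - mirrors) x) \<inter> negcone"

lemma lifted_cell_cell: "x \<in> negcone - mirrors \<Longrightarrow> lifted_cell (cell x)"
  unfolding lifted_cell_def cell_def by blast

lemma autL_image_cell:
  assumes h: "autL h" and inv: "\<And>x. h (h x) = x" and x: "x \<in> negcone - mirrors"
  shows "h ` cell x = cell (h x)"
proof -
  have lin: "linear h" and iso: "\<And>x y. bf (h x) (h y) = bf x y"
    using h unfolding autL_def by auto
  have inj: "inj h" by (rule injI) (metis inv)
  have neg: "h y \<in> negcone \<longleftrightarrow> y \<in> negcone" for y by (simp add: negcone_def iso)
  have "h y \<notin> mirrors" if "y \<notin> mirrors" for y
    using autL_mirrors[OF h, of "h y"] that by (auto simp: inv)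
  then have S: "h ` (negcone - mirrors) = negcone - mirrors"
    by (intro involution_image_eq inv) (simp add: neg)
  have N: "h ` negcone = negcone"
    by (intro involution_image_eq inv) (simp add: neg)
  have "continuous_on (negcone - mirrors) h"
    using lin by (simp add: linear_continuous_on linear_conv_bounded_linear)
  then have "homeomorphism (negcone - mirrors) (negcone - mirrors) h h"
    using S inv by (intro homeomorphismI) auto
  then have "h ` connected_component_set (negcone - mirrors) x
      = connected_component_set (negcone - mirrors) (h x)"
    using x by (simp add: connected_component_set_homeomorphism)
  then show ?thesis
    unfolding cell_def image_Int[OF inj] closure_injective_linear_image[OF lin inj] N by simp
qed

lemma linear_image_symmetrization:
  assumes "h ` P = uminus ` P" and "linear h"
  shows "h ` (P \<union> uminus ` P) = P \<union> uminus ` P"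
proof -
  have "h ` uminus ` P = uminus ` h ` P"
    using assms(2) by (simp add: image_image linear_neg)
  also have "\<dots> = P" by (simp add: assms(1) image_image)
  finally show ?thesis by (simp add: image_Un assms(1) Un_commute)
qed

lemma autL_reverses_cell:
  assumes "autL h" and "\<And>x. h (h x) = x" and x: "x \<in> negcone - mirrors" and "h x = - x"
  shows "h ` cell x = uminus ` cell x"
  using autL_image_cell[OF assms(1,2) x] autL_image_cell[OF autL_uminus minus_minus x] assms(4)
  by simp

subsection \<open>A point of the \<open>-1\<close>-eigenspace off all mirrors\<close>

lemma bf_sum_scaleR_left: "bf (\<Sum>i\<in>I. c i *\<^sub>R f i) w = (\<Sum>i\<in>I. c i * bf (f i) w)"
proof -
  interpret linear "\<lambda>v. bf v w" using bilinear_bf unfolding bilinear_def by simp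
  show ?thesis by (simp add: sum scale)
qed

lemma bf_sum_scaleR_right: "bf v (\<Sum>i\<in>I. c i *\<^sub>R f i) = (\<Sum>i\<in>I. c i * bf v (f i))"
proof -
  have "linear (bf v)" using bilinear_bf unfolding bilinear_def by simp
  then show ?thesis by (simp add: linear_sum linear_scale)
qed

lemma countable_mirror_parameters:
  fixes f :: "nat \<Rightarrow> real^19"
  assumes "\<And>v. v \<in> Vk 2 \<union> Vk 6 \<Longrightarrow> \<exists>i\<le>n. bf v (f i) \<noteq> 0"
  shows "countable {t. (\<Sum>i\<le>n. t ^ i *\<^sub>R f i) \<in> mirrors}"
proof -
  have "{t. (\<Sum>i\<le>n. t ^ i *\<^sub>R f i) \<in> mirrors}
      = (\<Union>v\<in>Vk 2 \<union> Vk 6. {t. (\<Sum>i\<le>n. bf v (f i) * t ^ i) = 0})"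
    unfolding mirrors_def by (simp add: set_eq_iff bf_sum_scaleR_right mult.commute)
  also have "countable \<dots>"
  proof (rule countable_UN)
    show "countable (Vk 2 \<union> Vk 6)"
      using countable_latL by (rule countable_subset[rotated]) (auto simp: Vk_def)
    fix v assume "v \<in> Vk 2 \<union> Vk 6"
    then obtain k where "k \<le> n" "bf v (f k) \<noteq> 0" using assms by blast
    then show "countable {t. (\<Sum>i\<le>n. bf v (f i) * t ^ i) = 0}"
      by (intro countable_finite polyfun_roots_finite)
  qed
  finally show ?thesis .
qed

lemma exists_regular_combination:
  fixes f :: "nat \<Rightarrow> real^19"
  assumes neg: "bf (f 0) (f 0) < 0"
    and reg: "\<And>v. v \<in> Vk 2 \<union> Vk 6 \<Longrightarrow> \<exists>i\<le>n. bf v (f i) \<noteq> 0"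
  shows "\<exists>t. (\<Sum>i\<le>n. t ^ i *\<^sub>R f i) \<in> negcone - mirrors"
proof -
  define x where "x t = (\<Sum>i\<le>n. t ^ i *\<^sub>R f i)" for t :: real
  have "x 0 = (\<Sum>i\<le>n. if i = 0 then f i else 0)"
    unfolding x_def by (intro sum.cong) (simp_all add: power_0_left)
  then have x0: "x 0 = f 0" by simp
  have bb: "bounded_bilinear bf"
    using bilinear_bf bilinear_conv_bounded_bilinear by blast
  have "isCont x 0" unfolding x_def by (intro continuous_intros)
  then have "isCont (\<lambda>t. bf (x t) (x t)) 0"
    using bounded_bilinear.isCont[OF bb] by blast
  then have "\<forall>\<^sub>F t in at 0. bf (x t) (x t) < 0"
    using neg x0 unfolding isCont_def by (intro order_tendstoD(2)) simp_all
  then obtain d :: real where "d > 0" and d: "\<And>t. t \<noteq> 0 \<Longrightarrow> dist t 0 < d \<Longrightarrow> bf (x t) (x t) < 0"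
    unfolding eventually_at by auto
  have "countable {t. x t \<in> mirrors}"
    unfolding x_def using reg by (rule countable_mirror_parameters)
  moreover have "uncountable {0<..<d}"
    using \<open>d > 0\<close> by (simp add: uncountable_open_interval)
  ultimately have "\<not> {0<..<d} \<subseteq> {t. x t \<in> mirrors}"
    using countable_subset by blast
  then obtain t where "t \<in> {0<..<d}" "x t \<notin> mirrors" by blast
  then have "x t \<in> negcone - mirrors" using d[of t] by (simp add: negcone_def dist_real_def)
  then show ?thesis unfolding x_def by blast
qed

subsection \<open>The orthogonal complement of the \<open>-1\<close>-eigenspace\<close>

lemma quadratic_form_dvd:
  fixes K :: "'a \<Rightarrow> 'a \<Rightarrow> int"
  assumes "finite A" and "\<And>a b. a \<in> A \<Longrightarrow> b \<in> A \<Longrightarrow> d dvd K a b + K b a"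
    and "\<And>a. a \<in> A \<Longrightarrow> d dvd K a a"
  shows "d dvd (\<Sum>a\<in>A. \<Sum>b\<in>A. K a b * y a * y b)"
  using assms
proof (induction A rule: finite_induct)
  case (insert c A)
  have "(\<Sum>a\<in>insert c A. \<Sum>b\<in>insert c A. K a b * y a * y b)
      = K c c * y c * y c + (\<Sum>b\<in>A. (K c b + K b c) * y c * y b)
        + (\<Sum>a\<in>A. \<Sum>b\<in>A. K a b * y a * y b)"
    using insert(1,2) by (simp add: sum.distrib algebra_simps)
  moreover have "d dvd K c c * y c * y c"
    by (intro dvd_mult2) (simp add: insert.prems(2))
  moreover have "d dvd (\<Sum>b\<in>A. (K c b + K b c) * y c * y b)"
    using insert.prems(1) by (intro dvd_sum dvd_mult2) simp
  moreover have "d dvd (\<Sum>a\<in>A. \<Sum>b\<in>A. K a b * y a * y b)"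
    using insert.prems by (intro insert.IH) auto
  ultimately show ?case by (simp only:) (intro dvd_add)
qed simp

lemma bf_minus_eigvec:
  assumes "m < 13"
  shows "bf v (lvec (minus_eigvecs ! m)) = (\<Sum>k<19. of_int (minus_eigvecs_dual ! m ! k) * coord v k)"
  unfolding bf_coord_right
proof (intro sum.cong refl)
  fix k assume "k \<in> {..<(19::nat)}"
  then have "(\<Sum>l<19. gram_rows ! k ! l * minus_eigvecs ! m ! l) = minus_eigvecs_dual ! m ! k"
    using minus_eigvecs_dual_eq assms by simp
  then have "of_int (\<Sum>l<19. gram_rows ! k ! l * minus_eigvecs ! m ! l)
      = (of_int (minus_eigvecs_dual ! m ! k) :: real)" by (rule arg_cong)
  then show "coord v k * (\<Sum>l<19. of_int (gram_rows ! k ! l) * coord (lvec (minus_eigvecs ! m)) l)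
      = of_int (minus_eigvecs_dual ! m ! k) * coord v k" by (simp add: mult.commute)
qed

lemma perp_coords_less: "j < 6 \<Longrightarrow> perp_coords ! j < 19"
  using nth_mem[of j perp_coords] by (auto simp: perp_coords_def)

lemma perp_minus_eigvecs_coord:
  assumes orth: "\<And>m. m < 13 \<Longrightarrow> bf v (lvec (minus_eigvecs ! m)) = 0" and k: "k < 19"
  shows "coord v k = (\<Sum>j<6. coord v (perp_coords ! j) * of_int (perp_basis ! j ! k))"
proof -
  define S where "S l = (\<Sum>j<6. if perp_coords ! j = l then perp_basis ! j ! k else 0)" for l
  have "(\<Sum>l<19. of_int (S l) * coord v l)
      = (\<Sum>l<19. \<Sum>j<6. if perp_coords ! j = l then of_int (perp_basis ! j ! k) * coord v l else 0)"
    unfolding S_def by (auto simp: sum_distrib_right of_int_sum intro!: sum.cong)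
  also have "\<dots> = (\<Sum>j<6. \<Sum>l<19. if perp_coords ! j = l then of_int (perp_basis ! j ! k) * coord v l else 0)"
    by (rule sum.swap)
  also have "\<dots> = (\<Sum>j<6. coord v (perp_coords ! j) * of_int (perp_basis ! j ! k))"
    by (intro sum.cong refl) (simp add: perp_coords_less mult.commute)
  finally have proj: "(\<Sum>l<19. of_int (S l) * coord v l)
      = (\<Sum>j<6. coord v (perp_coords ! j) * of_int (perp_basis ! j ! k))" .
  have "0 = (\<Sum>m<13. of_int (perp_certificate ! k ! m) * bf v (lvec (minus_eigvecs ! m)))"
    using orth by simp
  also have "\<dots> = (\<Sum>m<13. of_int (perp_certificate ! k ! m)
                      * (\<Sum>l<19. of_int (minus_eigvecs_dual ! m ! l) * coord v l))"
    by (intro sum.cong refl) (simp add: bf_minus_eigvec)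
  also have "\<dots> = (\<Sum>l<19. of_int (\<Sum>m<13. perp_certificate ! k ! m * minus_eigvecs_dual ! m ! l) * coord v l)"
    by (simp add: sum_mult_sum_swap)
  also have "\<dots> = (\<Sum>l<19. of_int (4 * ((if k = l then 1 else 0) - S l)) * coord v l)"
  proof (intro sum.cong refl)
    fix l assume "l \<in> {..<(19::nat)}"
    then have "l < 19" by simp
    with k have "4 * ((if k = l then 1 else 0) - S l)
        = (\<Sum>m<13. perp_certificate ! k ! m * minus_eigvecs_dual ! m ! l)"
      unfolding S_def by (rule perp_certificate_eq[rule_format])
    then show "of_int (\<Sum>m<13. perp_certificate ! k ! m * minus_eigvecs_dual ! m ! l) * coord v l
        = of_int (4 * ((if k = l then 1 else 0) - S l)) * coord v l" by simp
  qed
  also have "\<dots> = (\<Sum>l<19. 4 * ((if k = l then coord v l else 0) - of_int (S l) * coord v l))"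
    by (intro sum.cong refl) (simp add: algebra_simps)
  also have "\<dots> = 4 * ((\<Sum>l<19. if k = l then coord v l else 0) - (\<Sum>l<19. of_int (S l) * coord v l))"
    by (simp only: sum_distrib_left[symmetric] sum_subtractf)
  also have "\<dots> = 4 * (coord v k - (\<Sum>j<6. coord v (perp_coords ! j) * of_int (perp_basis ! j ! k)))"
    using k by (simp add: proj)
  finally show ?thesis by simp
qed

lemma perp_minus_eigvecs_norm:
  assumes "v \<in> latL" and "\<And>m. m < 13 \<Longrightarrow> bf v (lvec (minus_eigvecs ! m)) = 0"
  shows "\<exists>q::int. bf v v = of_int (4 * q)"
proof -
  define K where "K a b = (\<Sum>k<19. \<Sum>l<19. perp_basis ! a ! k * gram_rows ! k ! l * perp_basis ! b ! l)"
    for a b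
  have "\<forall>j<6. \<exists>z. coord v (perp_coords ! j) = of_int z"
    using assms(1) perp_coords_less unfolding latL_iff_coord by (auto elim!: Ints_cases)
  then obtain z where z: "\<And>j. j < 6 \<Longrightarrow> coord v (perp_coords ! j) = of_int (z j)" by metis
  have v: "v = (\<Sum>j<6. of_int (z j) *\<^sub>R lvec (perp_basis ! j))"
    by (rule vec_eq_coordI) (simp add: perp_minus_eigvecs_coord[OF assms(2)] z mult.commute)
  have K: "bf (lvec (perp_basis ! a)) (lvec (perp_basis ! b)) = of_int (K a b)" for a b
    unfolding bf_coord K_def by (simp add: mult_ac)
  have "bf v v = (\<Sum>b<6. of_int (z b) * (\<Sum>a<6. of_int (z a) * of_int (K a b)))"
    by (subst (1 2) v) (simp add: bf_sum_scaleR_left bf_sum_scaleR_right K)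
  also have "\<dots> = of_int (\<Sum>b<6. \<Sum>a<6. K a b * z a * z b)"
    by (simp add: sum_distrib_left mult_ac)
  also have "\<dots> = of_int (\<Sum>a<6. \<Sum>b<6. K a b * z a * z b)"
    by (subst sum.swap) (rule refl)
  finally have "bf v v = of_int (\<Sum>a<6. \<Sum>b<6. K a b * z a * z b)" .
  moreover have "4 dvd (\<Sum>a<6. \<Sum>b<6. K a b * z a * z b)"
    using perp_basis_gram_dvd by (intro quadratic_form_dvd) (simp_all add: K_def)
  then obtain q where "(\<Sum>a<6. \<Sum>b<6. K a b * z a * z b) = 4 * q" ..
  ultimately show ?thesis by (intro exI[of _ q]) simp
qed

lemma minus_eigvecs_off_mirror:
  assumes v: "v \<in> Vk 2 \<union> Vk 6"
  shows "\<exists>m\<le>12. bf v (lvec (minus_eigvecs ! m)) \<noteq> 0"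
proof (rule ccontr)
  assume "\<not> ?thesis"
  then have "\<And>m. m < 13 \<Longrightarrow> bf v (lvec (minus_eigvecs ! m)) = 0" by auto
  moreover have "v \<in> latL" and "bf v v = 2 \<or> bf v v = 6" using v unfolding Vk_def by auto
  ultimately obtain q :: int where "of_int (4 * q) = (2::real) \<or> of_int (4 * q) = (6::real)"
    using perp_minus_eigvecs_norm by metis
  then have "4 * q = 2 \<or> 4 * q = 6" by linarith
  then show False by presburger
qed

theorem corollary7p6p2:
  shows "\<exists>Ps g. lifted_cell Ps \<and> autL g
           \<and> g ` (Ps \<union> uminus ` Ps) = Ps \<union> uminus ` Ps
           \<and> g ` Ps = uminus ` Ps
           \<and> Z3_direct g"
proof -
  define f where "f m = lvec (minus_eigvecs ! m)" for m
  obtain t where x: "(\<Sum>i\<le>12. t ^ i *\<^sub>R f i) \<in> negcone - mirrors" (is "?x \<in> _")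
    using exists_regular_combination[of f 12] minus_eigvec_0_negative minus_eigvecs_off_mirror
    unfolding f_def by blast
  have lin: "linear aut" using autL_aut unfolding autL_def by blast
  then have "aut ?x = - ?x"
    using aut_minus_eigvec unfolding f_def by (simp add: linear_sum linear_scale sum_negf)
  then have rev: "aut ` cell ?x = uminus ` cell ?x"
    by (rule autL_reverses_cell[OF autL_aut aut_aut x])
  then have "aut ` (cell ?x \<union> uminus ` cell ?x) = cell ?x \<union> uminus ` cell ?x"
    using lin by (rule linear_image_symmetrization)
  then show ?thesis
    using lifted_cell_cell[OF x] autL_aut rev Z3_direct_aut by blast
qed

end
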